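(* If $J,K$ are two independent randomly-stopped bit sequences, then their concatenation $J\Vert K$ is a randomly-stopped bit sequence.
   Context: $\{0,1\}^*:=\bigcup_{n\ge0}\{0,1\}^n$; for $K\in\{0,1\}^*$, $|K|$ is its length, $K_i$ its $i$-th entry, and $K^{j}=(K_1,\dots,K_j)$; $J\Vert K$ denotes concatenation of sequences. A random $K\in\{0,1\}^*$ is a randomly-stopped bit sequence if $\mathbb{P}(K_n=k_n\mid |K|\ge n,\,K^{n-1}=k^{n-1})=1/2$ for all $n\ge1$ and all $k^n\in\{0,1\}^n$ with $\mathbb{P}(|K|\ge n,\,K^{n-1}=k^{n-1})>0$. *)

theory Defs
  imports "HOL-Probability.Probability"
begin

text \<open>Bit sequences are rendered as \<open>bool list\<close> (False = 0, True = 1);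
  the i-th entry K_i is \<open>K ! (i-1)\<close> and the prefix K^j is \<open>take j K\<close>.\<close>

definition rsbs :: "'a measure \<Rightarrow> ('a \<Rightarrow> bool list) \<Rightarrow> bool" where
  "rsbs M K \<longleftrightarrow>
     (\<forall>n::nat. \<forall>k::bool list. 1 \<le> n \<longrightarrow> length k = n \<longrightarrow>
        measure M {\<omega> \<in> space M. n \<le> length (K \<omega>) \<and> take (n - 1) (K \<omega>) = take (n - 1) k} > 0 \<longrightarrow>
        measure M {\<omega> \<in> space M. n \<le> length (K \<omega>) \<and> take (n - 1) (K \<omega>) = take (n - 1) k
                                 \<and> K \<omega> ! (n - 1) = k ! (n - 1)}
        / measure M {\<omega> \<in> space M. n \<le> length (K \<omega>) \<and> take (n - 1) (K \<omega>) = take (n - 1) k}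
        = 1 / 2)"

end

(* Without conditioning, the defining property of a randomly-stopped bit sequence K
   becomes linear in the distribution: P(p @ [b] is a prefix of K) is half of
   P(p is a strict prefix of K), and both vanish together.  For J @ K, the event that
   p (or p @ [b]) is a prefix splits disjointly: either J itself already extends it,
   or J equals some prefix xs of p and K continues with the rest of p.  By independence
   each event of the second kind has probability P(J = xs) times that of a K-event,
   so the halving passes from J and K to J @ K term by term. *)

theory Submission
  imports Defs "HOL-Library.Sublist"
begin

lemma prefix_iff_take: "prefix p xs \<longleftrightarrow> take (length p) xs = p"
  by (metis prefix_def append_take_drop_id append_eq_conv_conj)

lemma strict_prefix_iff_take:
  "strict_prefix p xs \<longleftrightarrow> length p < length xs \<and> take (length p) xs = p"
  unfolding strict_prefix_def prefix_iff_take
  by (metis nat_less_le nat_le_linear take_all)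

lemma prefix_snoc_iff_take:
  "prefix (p @ [b]) xs \<longleftrightarrow> length p < length xs \<and> take (length p) xs = p \<and> xs ! length p = b"
  by (metis append1_eq_conv length_take min_less_iff_conj lessI prefix_iff_take
      take_Suc_conv_app_nth length_append_singleton)

lemma strict_prefix_append_iff:
  "strict_prefix p (xs @ ys) \<longleftrightarrow>
     strict_prefix p xs \<or> (prefix xs p \<and> strict_prefix (drop (length xs) p) ys)"
proof (cases "prefix xs p")
  case True
  then obtain us where "p = xs @ us" by (auto simp: prefix_def)
  then show ?thesis by (auto simp: strict_prefix_def)
next
  case False
  then show ?thesis by (auto simp: strict_prefix_def prefix_append)
qed

lemma prefix_snoc_append_iff:
  "prefix (p @ [b]) (xs @ ys) \<longleftrightarrow>
     prefix (p @ [b]) xs \<or> (prefix xs p \<and> prefix (drop (length xs) p @ [b]) ys)"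
proof (cases "prefix xs p")
  case True
  then obtain us where "p = xs @ us" by (auto simp: prefix_def)
  then show ?thesis by (auto simp: strict_prefix_def)
next
  case False
  then show ?thesis by (auto simp: prefix_append) (metis append_self_conv prefixI prefix_snoc)
qed

lemma all_nonempty_list_iff_snoc:
  fixes P :: "nat \<Rightarrow> 'a list \<Rightarrow> bool"
  shows "(\<forall>n xs. 1 \<le> n \<longrightarrow> length xs = n \<longrightarrow> P n xs) \<longleftrightarrow> (\<forall>ys y. P (Suc (length ys)) (ys @ [y]))"
proof
  assume "\<forall>n xs. 1 \<le> n \<longrightarrow> length xs = n \<longrightarrow> P n xs"
  then show "\<forall>ys y. P (Suc (length ys)) (ys @ [y])" by simp
next
  assume snoc: "\<forall>ys y. P (Suc (length ys)) (ys @ [y])"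
  show "\<forall>n xs. 1 \<le> n \<longrightarrow> length xs = n \<longrightarrow> P n xs"
  proof (intro allI impI)
    fix n and xs :: "'a list"
    assume "1 \<le> n" and "length xs = n"
    then obtain ys y where "xs = ys @ [y]" by (cases xs rule: rev_cases) auto
    with snoc \<open>length xs = n\<close> show "P n xs" by auto
  qed
qed

lemma rsbs_iff_prefix:
  "rsbs M K \<longleftrightarrow>
     (\<forall>p b. 0 < measure M {\<omega> \<in> space M. strict_prefix p (K \<omega>)} \<longrightarrow>
        measure M {\<omega> \<in> space M. prefix (p @ [b]) (K \<omega>)}
        / measure M {\<omega> \<in> space M. strict_prefix p (K \<omega>)} = 1 / 2)"
  unfolding rsbs_def all_nonempty_list_iff_snoc
  by (simp add: strict_prefix_iff_take prefix_snoc_iff_take Suc_le_eq)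

definition prefix_halving :: "'a measure \<Rightarrow> ('a \<Rightarrow> bool list) \<Rightarrow> bool" where
  "prefix_halving M K \<longleftrightarrow>
     (\<forall>p b. measure M {\<omega> \<in> space M. prefix (p @ [b]) (K \<omega>)}
            = measure M {\<omega> \<in> space M. strict_prefix p (K \<omega>)} / 2)"

lemma rsbs_if_prefix_halving: "prefix_halving M K \<Longrightarrow> rsbs M K"
  unfolding rsbs_iff_prefix prefix_halving_def by simp

lemma sets_Collect_count_space:
  "X \<in> M \<rightarrow>\<^sub>M count_space UNIV \<Longrightarrow> {\<omega> \<in> space M. P (X \<omega>)} \<in> sets M"
  using measurable_sets[of X M "count_space UNIV" "Collect P"]
  by (simp add: vimage_def Int_def conj_commute)

context prob_space
begin

lemma prefix_halving_if_rsbs: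
  assumes K: "K \<in> M \<rightarrow>\<^sub>M count_space UNIV" and "rsbs M K"
  shows "prefix_halving M K"
  unfolding prefix_halving_def
proof (intro allI)
  fix p :: "bool list" and b :: bool
  let ?ext = "{\<omega> \<in> space M. prefix (p @ [b]) (K \<omega>)}"
  let ?pre = "{\<omega> \<in> space M. strict_prefix p (K \<omega>)}"
  show "prob ?ext = prob ?pre / 2"
  proof (cases "prob ?pre = 0")
    case True
    have "prob ?ext \<le> prob ?pre"
      by (rule finite_measure_mono) (auto simp: prefix_snocD sets_Collect_count_space[OF K])
    with True show ?thesis by (simp add: measure_le_0_iff)
  next
    case False
    then have "prob ?ext / prob ?pre = 1 / 2"
      using \<open>rsbs M K\<close> by (simp add: rsbs_iff_prefix zero_less_measure_iff)
    with False show ?thesis by (simp add: field_simps)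
  qed
qed

lemma prob_indep_var_conj:
  assumes "indep_var (count_space UNIV) J (count_space UNIV) K"
  shows "prob {\<omega> \<in> space M. A (J \<omega>) \<and> B (K \<omega>)}
       = prob {\<omega> \<in> space M. A (J \<omega>)} * prob {\<omega> \<in> space M. B (K \<omega>)}"
proof -
  have "prob ((\<lambda>\<omega>. (J \<omega>, K \<omega>)) -` (Collect A \<times> Collect B) \<inter> space M)
      = prob (J -` Collect A \<inter> space M) * prob (K -` Collect B \<inter> space M)"
    using indep_varD[OF assms] by simp
  then show ?thesis by (simp add: vimage_def Int_def conj_commute)
qed

lemma prob_split_on_first_value:
  assumes J: "J \<in> M \<rightarrow>\<^sub>M count_space UNIV" and K: "K \<in> M \<rightarrow>\<^sub>M count_space UNIV"
    and indep: "indep_var (count_space UNIV) J (count_space UNIV) K"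
    and "finite S" and disj: "\<And>x. x \<in> S \<Longrightarrow> \<not> A x"
  shows "prob {\<omega> \<in> space M. A (J \<omega>) \<or> (J \<omega> \<in> S \<and> B (J \<omega>) (K \<omega>))}
       = prob {\<omega> \<in> space M. A (J \<omega>)}
         + (\<Sum>x\<in>S. prob {\<omega> \<in> space M. J \<omega> = x} * prob {\<omega> \<in> space M. B x (K \<omega>)})"
proof -
  let ?E = "\<lambda>x. {\<omega> \<in> space M. J \<omega> = x \<and> B x (K \<omega>)}"
  have E_sets: "?E x \<in> sets M" for x
  proof -
    have "?E x = {\<omega> \<in> space M. J \<omega> = x} \<inter> {\<omega> \<in> space M. B x (K \<omega>)}"
      by auto
    then show ?thesis
      using sets_Collect_count_space[OF J] sets_Collect_count_space[OF K] by auto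
  qed
  have "{\<omega> \<in> space M. A (J \<omega>) \<or> (J \<omega> \<in> S \<and> B (J \<omega>) (K \<omega>))}
      = {\<omega> \<in> space M. A (J \<omega>)} \<union> (\<Union>x\<in>S. ?E x)"
    by auto
  also have "prob \<dots> = prob {\<omega> \<in> space M. A (J \<omega>)} + prob (\<Union>x\<in>S. ?E x)"
    using disj E_sets \<open>finite S\<close>
    by (intro finite_measure_Union sets_Collect_count_space[OF J] sets.finite_UN) auto
  also have "prob (\<Union>x\<in>S. ?E x) = (\<Sum>x\<in>S. prob (?E x))"
    using E_sets \<open>finite S\<close> by (intro finite_measure_finite_Union) (auto simp: disjoint_family_on_def)
  also have "\<dots> = (\<Sum>x\<in>S. prob {\<omega> \<in> space M. J \<omega> = x} * prob {\<omega> \<in> space M. B x (K \<omega>)})"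
  proof (rule sum.cong[OF refl])
    fix x
    show "prob (?E x) = prob {\<omega> \<in> space M. J \<omega> = x} * prob {\<omega> \<in> space M. B x (K \<omega>)}"
      using prob_indep_var_conj[OF indep, of "\<lambda>y. y = x" "B x"] by simp
  qed
  finally show ?thesis .
qed

lemma prefix_halving_append:
  assumes J: "J \<in> M \<rightarrow>\<^sub>M count_space UNIV" and K: "K \<in> M \<rightarrow>\<^sub>M count_space UNIV"
    and indep: "indep_var (count_space UNIV) J (count_space UNIV) K"
    and "prefix_halving M J" and "prefix_halving M K"
  shows "prefix_halving M (\<lambda>\<omega>. J \<omega> @ K \<omega>)"
  unfolding prefix_halving_def
proof (intro allI)
  fix p :: "bool list" and b :: bool
  let ?S = "{xs. prefix xs p}"
  let ?J_is = "\<lambda>xs. prob {\<omega> \<in> space M. J \<omega> = xs}"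
  let ?rest = "\<lambda>xs. drop (length xs) p"
  have "?S = set (prefixes p)"
    by auto
  then have "finite ?S"
    by simp
  have "prob {\<omega> \<in> space M. prefix (p @ [b]) (J \<omega> @ K \<omega>)}
      = prob {\<omega> \<in> space M. prefix (p @ [b]) (J \<omega>)
                            \<or> (J \<omega> \<in> ?S \<and> prefix (?rest (J \<omega>) @ [b]) (K \<omega>))}"
    by (simp add: prefix_snoc_append_iff)
  also have "\<dots> = prob {\<omega> \<in> space M. prefix (p @ [b]) (J \<omega>)}
        + (\<Sum>xs\<in>?S. ?J_is xs * prob {\<omega> \<in> space M. prefix (?rest xs @ [b]) (K \<omega>)})"
    by (rule prob_split_on_first_value[OF J K indep \<open>finite ?S\<close>]) (auto dest!: prefix_length_le)
  also have "\<dots> = prob {\<omega> \<in> space M. strict_prefix p (J \<omega>)} / 2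
        + (\<Sum>xs\<in>?S. ?J_is xs * prob {\<omega> \<in> space M. strict_prefix (?rest xs) (K \<omega>)} / 2)"
    using \<open>prefix_halving M J\<close> \<open>prefix_halving M K\<close>
    unfolding prefix_halving_def by (simp only: times_divide_eq_right)
  also have "\<dots> = (prob {\<omega> \<in> space M. strict_prefix p (J \<omega>)}
        + (\<Sum>xs\<in>?S. ?J_is xs * prob {\<omega> \<in> space M. strict_prefix (?rest xs) (K \<omega>)})) / 2"
    by (simp add: sum_divide_distrib add_divide_distrib)
  also have "\<dots> = prob {\<omega> \<in> space M. strict_prefix p (J \<omega>)
                            \<or> (J \<omega> \<in> ?S \<and> strict_prefix (?rest (J \<omega>)) (K \<omega>))} / 2"
    by (subst prob_split_on_first_value[OF J K indep \<open>finite ?S\<close>])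
       (auto simp: prefix_order.less_le_not_le)
  also have "\<dots> = prob {\<omega> \<in> space M. strict_prefix p (J \<omega> @ K \<omega>)} / 2"
    by (simp add: strict_prefix_append_iff)
  finally show "prob {\<omega> \<in> space M. prefix (p @ [b]) (J \<omega> @ K \<omega>)}
      = prob {\<omega> \<in> space M. strict_prefix p (J \<omega> @ K \<omega>)} / 2" .
qed

end

theorem proposition2:
  fixes M :: "'a measure" and J K :: "'a \<Rightarrow> bool list"
  assumes "prob_space M"
    and "J \<in> M \<rightarrow>\<^sub>M count_space UNIV"
    and "K \<in> M \<rightarrow>\<^sub>M count_space UNIV"
    and "prob_space.indep_var M (count_space UNIV) J (count_space UNIV) K"
    and "rsbs M J"
    and "rsbs M K"
  shows "rsbs M (\<lambda>\<omega>. J \<omega> @ K \<omega>)"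
proof -
  interpret prob_space M by fact
  have "prefix_halving M J" and "prefix_halving M K"
    using assms(2,3,5,6) by (auto intro: prefix_halving_if_rsbs)
  with assms(2-4) have "prefix_halving M (\<lambda>\<omega>. J \<omega> @ K \<omega>)"
    by (rule prefix_halving_append)
  then show ?thesis by (rule rsbs_if_prefix_halving)
qed
end
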